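(* For all $M,N\in\Lambda_\bot^{001}$, if $M\longrightarrow_{\beta\bot}^\infty N$ then $\mathcal T(M)\mathrel{\widetilde{\longrightarrow}_r^*}\mathcal T(N)$.
   Context: $\Lambda_\bot^{001}=\nu Y.\mu X.(\mathcal V+\lambda\mathcal V.X+(X)Y+\bot)$: possibly infinite trees built from variables, a constant $\bot$, abstractions and applications $(M)N$, whose infinite branches all enter infinitely often the argument position $N$ of an application, up to α-equivalence. $\longrightarrow_\beta$, $\longrightarrow_\beta^*$ are one-step β-reduction (contextual closure of $(\lambda x.M)N\to M[N/x]$) and its reflexive-transitive closure; $\longrightarrow_\beta^\infty$ is defined by the rules (var) $M\longrightarrow_\beta^* x\Rightarrow M\longrightarrow_\beta^\infty x$, (λ) $M\longrightarrow_\beta^*\lambda x.P$, $P\longrightarrow_\beta^\infty P'\Rightarrow M\longrightarrow_\beta^\infty\lambda x.P'$, (@) $M\longrightarrow_\beta^*(P)Q$, $P\longrightarrow_\beta^\infty P'$, $Q\longrightarrow_\beta^\infty Q'\Rightarrow M\longrightarrow_\beta^\infty(P')Q'$, with possibly infinite derivations in which every infinite branch crosses infinitely often the third premise of (@) (and similarly with $\bot$ as a leaf: $M\longrightarrow_\beta^*\bot\Rightarrow M\longrightarrow_\beta^\infty\bot$). A term $M$ is solvable if there are $x_1,\dots,x_m$ and $N_1,\dots,N_n$ with $(\dots((\lambda x_1\dots\lambda x_m.M)N_1)\dots)N_n\longrightarrow_\beta^\infty\lambda x.x$, unsolvable otherwise. The relation $\bot_0$ consists of the pairs $(M,\bot)$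 with $M$ unsolvable, $(\lambda x.\bot,\bot)$, and $((\bot)M,\bot)$. $\longrightarrow_{\beta\bot}$ is the contextual closure of β-contraction together with $\bot_0$, $\longrightarrow_{\beta\bot}^*$ its reflexive-transitive closure, and $\longrightarrow_{\beta\bot}^\infty$ is defined by the same rules as $\longrightarrow_\beta^\infty$ with $\longrightarrow_{\beta\bot}^*$ in place of $\longrightarrow_\beta^*$, plus the rule: $M\longrightarrow_{\beta\bot}^*\bot\Rightarrow M\longrightarrow_{\beta\bot}^\infty\bot$. Resource terms: $s::=x\mid\lambda x.s\mid\langle s\rangle\bar t$, $\bar t$ a finite multiset; finite sums are finite sets; resource reduction $\longmapsto_r$ is generated by $\langle\lambda x.s\rangle\bar t\longmapsto_r s\langle\bar t/x\rangle$ (linear substitution summed over all bijections between the elements of $\bar t$ and the free occurrences of $x$ in $s$, $0$ if their numbers differ) closed under contexts; on finite sums, $\sum_{i=0}^n s_i\longrightarrow_r\sum_{i=0}^n T_i$ when $s_0\longmapsto_r T_0$ and each other $s_i$ either reduces to $T_i$ or equals it; $\longrightarrow_r^*$ is the reflexive-transitive closure. For sets $\mathcal S,\mathcal S'$, $\mathcal S\mathrel{\widetilde{\longrightarrow}_r^*}\mathcal S'$ iff there are an index set $I$, terms $s_i$ and finite sums $S'_i$ with $\mathcal S=\{s_i\}_{i\in I}$, $\mathcal S'=\bigcup_i S'_i$ and $s_i\longrightarrow_r^* S'_i$. Taylor approximation $\ltimes$ is inductive: $x\ltimes x$; $s\ltimes M\Rightarrow\lambda x.s\ltimes\lambda x.M$;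 ($s\ltimes M$ and $t_i\ltimes N$ for all $i$) $\Rightarrow\langle s\rangle[t_1,\dots,t_n]\ltimes(M)N$; no resource term approximates $\bot$; $\mathcal T(M)=\{s : s\ltimes M\}$, so $\mathcal T(\bot)=\emptyset$. *)

theory Defs
  imports "HOL-Library.Multiset" "HOL-Library.BNF_Corec"
begin

codatatype lterm = LVar nat | LLam lterm | LApp lterm lterm | LBot

text \<open>The 001 condition: nu Y. mu X. (V + lambda V. X + (X)Y + bot).\<close>

inductive ind001 :: "(lterm \<Rightarrow> bool) \<Rightarrow> lterm \<Rightarrow> bool" for Y where
  i_var: "ind001 Y (LVar n)"
| i_bot: "ind001 Y LBot"
| i_lam: "ind001 Y t \<Longrightarrow> ind001 Y (LLam t)"
| i_app: "ind001 Y t \<Longrightarrow> Y u \<Longrightarrow> ind001 Y (LApp t u)"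

lemma ind001_mono[mono]: "(\<And>x. Y x \<longrightarrow> Y' x) \<Longrightarrow> ind001 Y t \<longrightarrow> ind001 Y' t"
proof
  assume h: "\<And>x. Y x \<longrightarrow> Y' x" and i: "ind001 Y t"
  from i show "ind001 Y' t" by (induction rule: ind001.induct) (auto intro: ind001.intros h[rule_format])
qed

coinductive T001 :: "lterm \<Rightarrow> bool" where
  "ind001 T001 t \<Longrightarrow> T001 t"

primcorec lift :: "nat \<Rightarrow> nat \<Rightarrow> lterm \<Rightarrow> lterm" where
  "lift c d t = (case t of
      LVar n \<Rightarrow> LVar (if c \<le> n then n + d else n)
    | LLam s \<Rightarrow> LLam (lift (Suc c) d s)
    | LApp s u \<Rightarrow> LApp (lift c d s) (lift c d u)
    | LBot \<Rightarrow> LBot)"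

text \<open>subst k N t: substitute N (living outside the k binders) for index k,
  decrementing the free indices above k.\<close>
corec subst :: "nat \<Rightarrow> lterm \<Rightarrow> lterm \<Rightarrow> lterm" where
  "subst k N t = (case t of
      LVar n \<Rightarrow> (if n = k then lift 0 k N else if k < n then LVar (n - 1) else LVar n)
    | LLam s \<Rightarrow> LLam (subst (Suc k) N s)
    | LApp s u \<Rightarrow> LApp (subst k N s) (subst k N u)
    | LBot \<Rightarrow> LBot)"

inductive beta :: "lterm \<Rightarrow> lterm \<Rightarrow> bool" where
  b_redex: "beta (LApp (LLam M) N) (subst 0 N M)"
| b_lam: "beta M M' \<Longrightarrow> beta (LLam M) (LLam M')"
| b_appl: "beta M M' \<Longrightarrow> beta (LApp M N) (LApp M' N)"
| b_appr: "beta N N' \<Longrightarrow> beta (LApp M N) (LApp M N')"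

inductive infind :: "(lterm \<Rightarrow> lterm \<Rightarrow> bool) \<Rightarrow> (lterm \<Rightarrow> lterm \<Rightarrow> bool) \<Rightarrow> lterm \<Rightarrow> lterm \<Rightarrow> bool"
  for R Y where
  inf_var: "R\<^sup>*\<^sup>* M (LVar x) \<Longrightarrow> infind R Y M (LVar x)"
| inf_bot: "R\<^sup>*\<^sup>* M LBot \<Longrightarrow> infind R Y M LBot"
| inf_lam: "R\<^sup>*\<^sup>* M (LLam P) \<Longrightarrow> infind R Y P P' \<Longrightarrow> infind R Y M (LLam P')"
| inf_app: "R\<^sup>*\<^sup>* M (LApp P Q) \<Longrightarrow> infind R Y P P' \<Longrightarrow> Y Q Q' \<Longrightarrow> infind R Y M (LApp P' Q')"

lemma infind_mono[mono]: "(\<And>x y. Y x y \<longrightarrow> Y' x y) \<Longrightarrow> infind R Y M N \<longrightarrow> infind R Y' M N"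
proof
  assume h: "\<And>x y. Y x y \<longrightarrow> Y' x y" and i: "infind R Y M N"
  from i show "infind R Y' M N" by (induction rule: infind.induct) (auto intro: infind.intros h[rule_format])
qed

coinductive infred :: "(lterm \<Rightarrow> lterm \<Rightarrow> bool) \<Rightarrow> lterm \<Rightarrow> lterm \<Rightarrow> bool" for R where
  "infind R (infred R) M N \<Longrightarrow> infred R M N"

abbreviation beta_inf :: "lterm \<Rightarrow> lterm \<Rightarrow> bool" where
  "beta_inf \<equiv> infred beta"

fun lams :: "nat \<Rightarrow> lterm \<Rightarrow> lterm" where
  "lams 0 M = M"
| "lams (Suc m) M = LLam (lams m M)"

definition apps :: "lterm \<Rightarrow> lterm list \<Rightarrow> lterm" where
  "apps M Ns = foldl LApp M Ns"

definition solvable :: "lterm \<Rightarrow> bool" where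
  "solvable M \<longleftrightarrow> (\<exists>m Ns. (\<forall>N\<in>set Ns. T001 N) \<and> beta_inf (apps (lams m M) Ns) (LLam (LVar 0)))"

inductive bot0 :: "lterm \<Rightarrow> lterm \<Rightarrow> bool" where
  bot_unsolv: "T001 M \<Longrightarrow> \<not> solvable M \<Longrightarrow> bot0 M LBot"
| bot_lam: "bot0 (LLam LBot) LBot"
| bot_app: "bot0 (LApp LBot M) LBot"

inductive betabot :: "lterm \<Rightarrow> lterm \<Rightarrow> bool" where
  bb_redex: "betabot (LApp (LLam M) N) (subst 0 N M)"
| bb_bot: "bot0 M M' \<Longrightarrow> betabot M M'"
| bb_lam: "betabot M M' \<Longrightarrow> betabot (LLam M) (LLam M')"
| bb_appl: "betabot M M' \<Longrightarrow> betabot (LApp M N) (LApp M' N)"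
| bb_appr: "betabot N N' \<Longrightarrow> betabot (LApp M N) (LApp M N')"

abbreviation betabot_inf :: "lterm \<Rightarrow> lterm \<Rightarrow> bool" where
  "betabot_inf \<equiv> infred betabot"

datatype rterm = RVar nat | RLam rterm | RApp rterm "rterm multiset"

primrec rlift :: "nat \<Rightarrow> nat \<Rightarrow> rterm \<Rightarrow> rterm" where
  "rlift c d (RVar n) = RVar (if c \<le> n then n + d else n)"
| "rlift c d (RLam s) = RLam (rlift (Suc c) d s)"
| "rlift c d (RApp s ts) = RApp (rlift c d s) (image_mset (rlift c d) ts)"

text \<open>lsub k T s s': s' is a summand of the linear substitution of the bag T for
  index k in s (sums are sets, so the sum over bijections is the set of its summands).\<close>
inductive lsub :: "nat \<Rightarrow> rterm multiset \<Rightarrow> rterm \<Rightarrow> rterm \<Rightarrow> bool" where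
  ls_hit: "lsub k {#t#} (RVar k) (rlift 0 k t)"
| ls_miss: "n \<noteq> k \<Longrightarrow> lsub k {#} (RVar n) (RVar (if k < n then n - 1 else n))"
| ls_lam: "lsub (Suc k) T s s' \<Longrightarrow> lsub k T (RLam s) (RLam s')"
| ls_app: "lsub k T0 s s' \<Longrightarrow> length Ts = length us \<Longrightarrow> length us' = length us \<Longrightarrow>
     (\<forall>i<length us. lsub k (Ts ! i) (us ! i) (us' ! i)) \<Longrightarrow>
     lsub k (T0 + sum_list Ts) (RApp s (mset us)) (RApp s' (mset us'))"

definition linsubst :: "rterm \<Rightarrow> rterm multiset \<Rightarrow> rterm set" where
  "linsubst s ts = {s'. lsub 0 ts s s'}"

inductive rred :: "rterm \<Rightarrow> rterm set \<Rightarrow> bool" where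
  r_redex: "rred (RApp (RLam s) ts) (linsubst s ts)"
| r_lam: "rred s T \<Longrightarrow> rred (RLam s) (RLam ` T)"
| r_head: "rred s T \<Longrightarrow> rred (RApp s ts) ((\<lambda>s'. RApp s' ts) ` T)"
| r_arg: "rred t T \<Longrightarrow> rred (RApp s (add_mset t ts)) ((\<lambda>t'. RApp s (add_mset t' ts)) ` T)"

definition rsum_step :: "rterm set \<Rightarrow> rterm set \<Rightarrow> bool" where
  "rsum_step S S' \<longleftrightarrow> (\<exists>s0 T0 ss Ts. rred s0 T0 \<and> length Ts = length ss \<and>
     (\<forall>i<length ss. rred (ss ! i) (Ts ! i) \<or> Ts ! i = {ss ! i}) \<and>
     S = insert s0 (set ss) \<and> S' = T0 \<union> \<Union>(set Ts))"

abbreviation rsum_star :: "rterm set \<Rightarrow> rterm set \<Rightarrow> bool" where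
  "rsum_star \<equiv> rsum_step\<^sup>*\<^sup>*"

text \<open>Extension to arbitrary sets: indexed by the family of pairs (s_i, S'_i).\<close>
definition rtilde :: "rterm set \<Rightarrow> rterm set \<Rightarrow> bool" where
  "rtilde S S' \<longleftrightarrow> (\<exists>P :: (rterm \<times> rterm set) set.
     S = fst ` P \<and> S' = \<Union>(snd ` P) \<and> (\<forall>(s, T)\<in>P. finite T \<and> rsum_star {s} T))"

inductive approx :: "rterm \<Rightarrow> lterm \<Rightarrow> bool" where
  a_var: "approx (RVar n) (LVar n)"
| a_lam: "approx s M \<Longrightarrow> approx (RLam s) (LLam M)"
| a_app: "approx s M \<Longrightarrow> (\<forall>t\<in>#ts. approx t N) \<Longrightarrow> approx (RApp s ts) (LApp M N)"

definition taylor :: "lterm \<Rightarrow> rterm set" where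
  "taylor M = {s. approx s M}"

end

theory Submission
  imports Defs
begin

text \<open>
  One beta-bottom step \<open>M \<rightarrow> M'\<close> is simulated on
  every approximant \<open>s\<close> of \<open>M\<close> by finitely many resource steps leading to a finite sum of
  approximants of \<open>M'\<close>, and every approximant of \<open>M'\<close> occurs in such a sum. For a redex this
  is the correspondence between substitution and linear substitution. When an unsolvable \<open>M\<close> is
  sent to bottom, every approximant of \<open>M\<close> reduces to \<open>0\<close>: if it is in head normal form then so
  is \<open>M\<close>, which would make \<open>M\<close> solvable; otherwise its head redex is also a redex of \<open>M\<close>, whose
  contraction keeps \<open>M\<close> unsolvable and strictly shrinks the approximant.

  For infinitary reduction, induction is on the size of approximants. An approximant of \<open>M\<close>
  only meets the finite prefix \<open>M \<rightarrow>\<^sup>* \<lambda>x.P\<close> or \<open>M \<rightarrow>\<^sup>* (P)Q\<close> of the derivation;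
  resource reduction never increases size, so after simulating the prefix the induction
  hypothesis applies to the strictly smaller approximants of \<open>P\<close> and \<open>Q\<close>.
\<close>

lemma lift_simps [simp]:
  "lift c d (LVar n) = LVar (if c \<le> n then n + d else n)"
  "lift c d (LLam s) = LLam (lift (Suc c) d s)"
  "lift c d (LApp s u) = LApp (lift c d s) (lift c d u)"
  "lift c d LBot = LBot"
  by (subst lift.code; simp)+

lemma subst_simps [simp]:
  "subst k N (LVar n) = (if n = k then lift 0 k N else if k < n then LVar (n - 1) else LVar n)"
  "subst k N (LLam s) = LLam (subst (Suc k) N s)"
  "subst k N (LApp s u) = LApp (subst k N s) (subst k N u)"
  "subst k N LBot = LBot"
  by (subst subst.code; simp)+

lemma rsum_stepE:
  assumes "rsum_step S S'"
  obtains s0 T0 ss Ts where "rred s0 T0" "length Ts = length ss"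
    "\<forall>i<length ss. rred (ss ! i) (Ts ! i) \<or> Ts ! i = {ss ! i}"
    "S = insert s0 (set ss)" "S' = T0 \<union> \<Union>(set Ts)"
  using assms unfolding rsum_step_def by blast

lemma rsum_step_of_rred: "rred s T \<Longrightarrow> rsum_step {s} T"
  unfolding rsum_step_def by (intro exI[of _ s] exI[of _ T] exI[of _ "[]"]) simp

lemma rsum_star_image:
  assumes f: "\<And>s T. rred s T \<Longrightarrow> rred (f s) (f ` T)"
    and "rsum_star A B"
  shows "rsum_star (f ` A) (f ` B)"
  using assms(2)
proof (induction rule: rtranclp_induct)
  case (step B C)
  from step(2) obtain s0 T0 ss Ts where h: "rred s0 T0" "length Ts = length ss"
    "\<forall>i<length ss. rred (ss ! i) (Ts ! i) \<or> Ts ! i = {ss ! i}"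
    "B = insert s0 (set ss)" "C = T0 \<union> \<Union>(set Ts)"
    by (rule rsum_stepE)
  have "rsum_step (f ` B) (f ` C)"
    unfolding rsum_step_def
  proof (intro exI conjI)
    show "rred (f s0) (f ` T0)" using f h(1) .
    show "\<forall>i<length (map f ss). rred (map f ss ! i) (map ((`) f) Ts ! i) \<or>
        map ((`) f) Ts ! i = {map f ss ! i}"
      using h(2,3) f by auto
  qed (use h in auto)
  then show ?case using step(3) by simp
qed simp

lemma rsum_star_Un_left:
  assumes "rsum_star A B" and "finite C"
  shows "rsum_star (C \<union> A) (C \<union> B)"
  using assms(1)
proof (induction rule: rtranclp_induct)
  case (step B D)
  from step(2) obtain s0 T0 ss Ts where h: "rred s0 T0" "length Ts = length ss"
    "\<forall>i<length ss. rred (ss ! i) (Ts ! i) \<or> Ts ! i = {ss ! i}"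
    "B = insert s0 (set ss)" "D = T0 \<union> \<Union>(set Ts)"
    by (rule rsum_stepE)
  obtain cs where cs: "set cs = C" using finite_list[OF assms(2)] by blast
  have "rsum_step (C \<union> B) (C \<union> D)"
    unfolding rsum_step_def
  proof (intro exI conjI)
    show "\<forall>i<length (ss @ cs). rred ((ss @ cs) ! i) ((Ts @ map (\<lambda>c. {c}) cs) ! i) \<or>
        (Ts @ map (\<lambda>c. {c}) cs) ! i = {(ss @ cs) ! i}"
      using h(2,3) by (auto simp: nth_append)
  qed (use h cs in auto)
  then show ?case using step(3) by simp
qed simp

lemma rsum_star_UN_image:
  assumes "finite A" and "\<And>x. x \<in> A \<Longrightarrow> finite (B x) \<and> rsum_star {f x} (B x)"
  shows "rsum_star (f ` A) (\<Union>x\<in>A. B x)"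
  using assms
proof (induction A rule: finite_induct)
  case (insert a A)
  have "rsum_star (f ` A \<union> {f a}) (f ` A \<union> B a)"
    using rsum_star_Un_left[of "{f a}" "B a" "f ` A"] insert by auto
  moreover have "rsum_star (B a \<union> f ` A) (B a \<union> (\<Union>x\<in>A. B x))"
    using rsum_star_Un_left[of "f ` A" "\<Union>x\<in>A. B x" "B a"] insert by auto
  ultimately show ?case by (simp add: Un_commute insert_absorb)
qed simp

lemma rsum_star_UN:
  "finite A \<Longrightarrow> (\<And>x. x \<in> A \<Longrightarrow> finite (B x) \<and> rsum_star {x} (B x)) \<Longrightarrow>
    rsum_star A (\<Union>x\<in>A. B x)"
  using rsum_star_UN_image[of A B "\<lambda>x. x"] by simp

definition bag_choices :: "rterm \<Rightarrow> rterm multiset \<Rightarrow> rterm set list \<Rightarrow> rterm set" where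
  "bag_choices s E Ts = {RApp s (E + mset us) | us. list_all2 (\<in>) us Ts}"

lemma bag_choices_Nil: "bag_choices s E [] = {RApp s E}"
  by (simp add: bag_choices_def)

lemma bag_choices_Cons:
  "bag_choices s E (T # Ts) = (\<Union>t\<in>T. bag_choices s (add_mset t E) Ts)"
  unfolding bag_choices_def by (auto simp: list_all2_Cons2) (force, metis mset.simps(2))

lemma finite_bag_choices: "\<forall>T\<in>set Ts. finite T \<Longrightarrow> finite (bag_choices s E Ts)"
  by (induction Ts arbitrary: E) (auto simp: bag_choices_Nil bag_choices_Cons)

lemma bag_choices_subset:
  assumes "\<forall>T\<in>set Ts. T \<subseteq> Y"
  shows "bag_choices s E Ts \<subseteq> {RApp s (E + b) | b. set_mset b \<subseteq> Y}"
proof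
  fix x assume "x \<in> bag_choices s E Ts"
  then obtain us where us: "x = RApp s (E + mset us)" "list_all2 (\<in>) us Ts"
    unfolding bag_choices_def by blast
  from us(2) assms have "set us \<subseteq> Y"
    by (induction rule: list_all2_induct) auto
  then show "x \<in> {RApp s (E + b) | b. set_mset b \<subseteq> Y}"
    using us(1) by auto
qed

lemma rsum_star_bag_choices:
  "list_all2 (\<lambda>t T. finite T \<and> rsum_star {t} T) ts Ts \<Longrightarrow>
    rsum_star {RApp s (E + mset ts)} (bag_choices s E Ts)"
proof (induction ts Ts arbitrary: E rule: list_all2_induct)
  case Nil
  then show ?case by (simp add: bag_choices_Nil)
next
  case (Cons t ts T Ts)
  define f where "f x = RApp s (add_mset x (E + mset ts))" for x
  have "\<forall>T'\<in>set Ts. finite T'"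
    using Cons.hyps(2) by (induction rule: list_all2_induct) auto
  then have "rsum_star (f ` T) (\<Union>t'\<in>T. bag_choices s (add_mset t' E) Ts)"
    using Cons.hyps(1) Cons.IH[of "add_mset _ E"]
    by (intro rsum_star_UN_image) (auto simp: f_def finite_bag_choices)
  moreover have "rsum_star (f ` {t}) (f ` T)"
    by (rule rsum_star_image) (use Cons.hyps(1) in \<open>auto simp: f_def intro: rred.r_arg\<close>)
  ultimately show ?case by (simp add: f_def bag_choices_Cons)
qed

primrec rsize :: "rterm \<Rightarrow> nat" where
  "rsize (RVar n) = 1"
| "rsize (RLam s) = Suc (rsize s)"
| "rsize (RApp s ts) = Suc (rsize s + sum_mset (image_mset rsize ts))"

lemma rsize_rlift [simp]: "rsize (rlift c d t) = rsize t"
proof (induction t arbitrary: c)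
  case (RApp s ts)
  have "image_mset rsize (image_mset (rlift c d) ts) = image_mset rsize ts"
    using RApp.IH(2) by (simp add: image_mset.compositionality o_def cong: image_mset_cong)
  then show ?case using RApp by simp
qed auto

lemma rsize_less_RApp: "y \<in># ts \<Longrightarrow> rsize y < rsize (RApp s ts)"
  by (auto dest!: multi_member_split)

lemma sum_mset_image_sum_list:
  "sum_mset (image_mset f (sum_list Ts)) = sum_list (map (\<lambda>T. sum_mset (image_mset f T)) Ts)"
  by (induction Ts) auto

lemma sum_mset_image_sum_mset:
  "sum_mset (image_mset f (sum_mset TT)) = sum_mset (image_mset (\<lambda>T. sum_mset (image_mset f T)) TT)"
  by (induction TT) auto

lemma lsub_rsize: "lsub k T s s' \<Longrightarrow> rsize s' + size T = rsize s + sum_mset (image_mset rsize T)"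
proof (induction rule: lsub.induct)
  case (ls_app k T0 s s' Ts us us')
  have "sum_list (map rsize us') + sum_list (map size Ts) =
        sum_list (map rsize us) + sum_list (map (\<lambda>T. sum_mset (image_mset rsize T)) Ts)"
    using ls_app.hyps(2,3) ls_app.IH
    by (simp add: sum_list_sum_nth atLeast0LessThan sum.distrib[symmetric])
  then show ?case using ls_app.IH(1)
    by (simp add: sum_mset_image_sum_list sum_mset_image_sum_mset sum_mset_sum_list[symmetric]
        size_multiset_sum_list)
qed auto

lemma rred_rsize_less: "rred s T \<Longrightarrow> u \<in> T \<Longrightarrow> rsize u < rsize s"
proof (induction arbitrary: u rule: rred.induct)
  case (r_redex s ts)
  then have "rsize u + size ts = rsize s + sum_mset (image_mset rsize ts)"
    using lsub_rsize unfolding linsubst_def by blast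
  then show ?case by simp
qed auto

lemma rsum_star_rsize_le: "rsum_star A B \<Longrightarrow> u \<in> B \<Longrightarrow> \<exists>a\<in>A. rsize u \<le> rsize a"
proof (induction arbitrary: u rule: rtranclp_induct)
  case (step B C)
  from step(2) obtain s0 T0 ss Ts where h: "rred s0 T0" "length Ts = length ss"
    "\<forall>i<length ss. rred (ss ! i) (Ts ! i) \<or> Ts ! i = {ss ! i}"
    "B = insert s0 (set ss)" "C = T0 \<union> \<Union>(set Ts)"
    by (rule rsum_stepE)
  have "\<exists>b\<in>B. rsize u \<le> rsize b"
  proof (cases "u \<in> T0")
    case True
    then show ?thesis using rred_rsize_less[OF h(1)] h(4) by (auto intro: less_imp_le)
  next
    case False
    then obtain i where i: "i < length ss" "u \<in> Ts ! i"
      using h(2,5) step(4) by (auto simp: in_set_conv_nth)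
    then have "rsize u \<le> rsize (ss ! i)"
      using h(3) rred_rsize_less[of "ss ! i" "Ts ! i" u] by (auto intro: less_imp_le)
    then show ?thesis using h(4) i(1) by auto
  qed
  then show ?case using step(3) by (meson order_trans)
qed auto

lemma finite_submultisets: "finite {T0. T0 \<subseteq># T}"
proof -
  have "{T0. T0 \<subseteq># T} \<subseteq> mset ` {ys. set ys \<subseteq> set_mset T \<and> length ys \<le> size T}"
  proof
    fix T0 assume "T0 \<in> {T0. T0 \<subseteq># T}"
    moreover obtain ys where "mset ys = T0" using ex_mset by blast
    ultimately show "T0 \<in> mset ` {ys. set ys \<subseteq> set_mset T \<and> length ys \<le> size T}"
      by (metis (mono_tags, lifting) image_eqI mem_Collect_eq set_mset_mono set_mset_mset
          size_mset size_mset_mono)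
  qed
  moreover have "finite {ys. set ys \<subseteq> set_mset T \<and> length ys \<le> size T}"
    by (rule finite_lists_length_le) simp
  ultimately show ?thesis by (meson finite_imageI finite_subset)
qed

lemma nth_subseteq_sum_list: "i < length Ts \<Longrightarrow> Ts ! i \<subseteq># sum_list Ts"
proof (induction Ts arbitrary: i)
  case (Cons T Ts)
  then show ?case by (cases i) (auto intro: subset_mset.order_trans[OF _ mset_subset_eq_add_right])
qed simp

lemma lsub_RAppE:
  assumes "lsub k T (RApp s bag) s'"
  obtains s'' us' where "s' = RApp s'' (mset us')" "length us' = size bag"
    "\<exists>T0. T0 \<subseteq># T \<and> lsub k T0 s s''"
    "\<forall>x\<in>set us'. \<exists>u T'. u \<in># bag \<and> T' \<subseteq># T \<and> lsub k T' u x"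
proof -
  obtain T0 Ts us us' s'' where h: "T = T0 + sum_list Ts" "bag = mset us"
    "s' = RApp s'' (mset us')" "lsub k T0 s s''" "length Ts = length us" "length us' = length us"
    "\<forall>i<length us. lsub k (Ts ! i) (us ! i) (us' ! i)"
    using assms by (auto elim: lsub.cases)
  have "\<forall>x\<in>set us'. \<exists>u T'. u \<in># bag \<and> T' \<subseteq># T \<and> lsub k T' u x"
  proof
    fix x assume "x \<in> set us'"
    then obtain i where i: "i < length us" "x = us' ! i" using h(6) by (auto simp: in_set_conv_nth)
    have "Ts ! i \<subseteq># T" using h(1,5) i(1) nth_subseteq_sum_list[of i Ts]
      by (metis mset_subset_eq_add_right subset_mset.order_trans add.commute)
    then show "\<exists>u T'. u \<in># bag \<and> T' \<subseteq># T \<and> lsub k T' u x"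
      using h(2,7) i by (metis nth_mem set_mset_mset)
  qed
  moreover have "\<exists>T0. T0 \<subseteq># T \<and> lsub k T0 s s''"
    using h(1,4) by (auto intro: mset_subset_eq_add_left)
  ultimately show ?thesis using that h(2,3,6) by simp
qed

lemma finite_lsub: "finite {s'. lsub k T s s'}"
proof (induction s arbitrary: k T)
  case (RVar n)
  have "{s'. lsub k T (RVar n) s'} \<subseteq> rlift 0 k ` set_mset T \<union> {RVar (if k < n then n - 1 else n)}"
    by (auto elim: lsub.cases)
  then show ?case by (rule finite_subset) auto
next
  case (RLam s)
  have "{s'. lsub k T (RLam s) s'} \<subseteq> RLam ` {s'. lsub (Suc k) T s s'}"
    by (auto elim: lsub.cases)
  then show ?case using RLam.IH by (rule finite_subset[OF _ finite_imageI])
next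
  case (RApp s0 bag)
  define A where "A = (\<Union>T0\<in>{T0. T0 \<subseteq># T}. {s'. lsub k T0 s0 s'})"
  define B where "B = (\<Union>(u, T')\<in>set_mset bag \<times> {T0. T0 \<subseteq># T}. {s'. lsub k T' u s'})"
  have "finite A" unfolding A_def using RApp.IH(1) finite_submultisets by blast
  moreover have "finite B" unfolding B_def
    using RApp.IH(2) finite_submultisets[of T] by (auto intro: finite_cartesian_product)
  ultimately have "finite (A \<times> {l. set l \<subseteq> B \<and> length l = size bag})"
    by (simp add: finite_lists_length_eq)
  moreover have "{s'. lsub k T (RApp s0 bag) s'} \<subseteq>
      (\<lambda>(a, l). RApp a (mset l)) ` (A \<times> {l. set l \<subseteq> B \<and> length l = size bag})"
  proof
    fix s' assume "s' \<in> {s'. lsub k T (RApp s0 bag) s'}"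
    then obtain s'' us' where "s' = RApp s'' (mset us')" "length us' = size bag"
      "s'' \<in> A" "set us' \<subseteq> B"
      unfolding A_def B_def by (auto elim!: lsub_RAppE) blast
    then show "s' \<in> (\<lambda>(a, l). RApp a (mset l)) ` (A \<times> {l. set l \<subseteq> B \<and> length l = size bag})"
      by auto
  qed
  ultimately show ?case by (meson finite_imageI finite_subset)
qed

lemma finite_rred: "rred s T \<Longrightarrow> finite T"
  by (induction rule: rred.induct) (auto simp: linsubst_def finite_lsub)

section \<open>Taylor approximation and substitution\<close>

inductive_simps approx_RVar [simp]: "approx (RVar n) M"
inductive_simps approx_RLam [simp]: "approx (RLam s) M"
inductive_simps approx_RApp [simp]: "approx (RApp s ts) M"
inductive_simps approx_LBot [simp]: "approx s LBot"
inductive_simps approx_LLam: "approx s (LLam M)"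
inductive_simps approx_LApp: "approx s (LApp M N)"

lemma mem_taylor [simp]: "s \<in> taylor M \<longleftrightarrow> approx s M"
  by (simp add: taylor_def)

lemma taylor_LBot [simp]: "taylor LBot = {}"
  by auto

lemma taylor_LLam: "taylor (LLam M) = RLam ` taylor M"
  by (auto simp: approx_LLam)

lemma taylor_LApp: "taylor (LApp M N) = {RApp s b | s b. s \<in> taylor M \<and> set_mset b \<subseteq> taylor N}"
  by (auto simp: approx_LApp subset_iff)

lemma approx_lift: "approx t N \<Longrightarrow> approx (rlift c d t) (lift c d N)"
  by (induction arbitrary: c rule: approx.induct) auto

lemma approx_lift_invert: "approx t (lift c d N) \<Longrightarrow> \<exists>t0. t = rlift c d t0 \<and> approx t0 N"
proof (induction t arbitrary: c N)
  case (RVar n)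
  then show ?case by (cases N) (auto intro: exI[of _ "RVar _"])
next
  case (RLam t)
  then show ?case by (cases N) (auto, metis rlift.simps(2) approx.a_lam)
next
  case (RApp t ts)
  then obtain N1 N2 where N: "N = LApp N1 N2" "approx t (lift c d N1)"
    "\<forall>x\<in>#ts. approx x (lift c d N2)"
    by (cases N) auto
  obtain t0 where t0: "t = rlift c d t0" "approx t0 N1" using RApp.IH(1) N(2) by blast
  have "\<forall>x\<in>#ts. \<exists>x0. x = rlift c d x0 \<and> approx x0 N2" using RApp.IH(2) N(3) by blast
  then obtain g where g: "\<forall>x\<in>#ts. x = rlift c d (g x) \<and> approx (g x) N2"
    by metis
  then have "image_mset (rlift c d) (image_mset g ts) = ts"
    by (simp add: image_mset.compositionality o_def image_mset_cong[of ts _ id, simplified])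
  then show ?case using t0 g N by (intro exI[of _ "RApp t0 (image_mset g ts)"]) auto
qed

lemma lsub_approx_subst:
  "lsub k ts s s' \<Longrightarrow> approx s M \<Longrightarrow> \<forall>t\<in>#ts. approx t N \<Longrightarrow> approx s' (subst k N M)"
proof (induction arbitrary: M rule: lsub.induct)
  case (ls_app k T0 s s' Ts us us')
  then obtain M1 M2 where M: "M = LApp M1 M2" "approx s M1" "\<forall>u\<in>set us. approx u M2"
    by auto
  have "\<forall>x\<in>set us'. approx x (subst k N M2)"
  proof
    fix x assume "x \<in> set us'"
    then obtain i where i: "i < length us" "x = us' ! i"
      using ls_app.hyps(3) by (auto simp: in_set_conv_nth)
    have "\<forall>t\<in>#Ts ! i. approx t N"
      using ls_app.prems(2) nth_subseteq_sum_list[of i Ts] i(1) ls_app.hyps(2)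
      by (metis mset_subset_eqD union_iff)
    then show "approx x (subst k N M2)" using ls_app.IH(2) i M(3) by auto
  qed
  then show ?case using ls_app M by auto
qed (auto intro: approx_lift)

lemma approx_subst_LVar_invert:
  assumes "approx t (subst k N (LVar n))"
  shows "\<exists>s ts. approx s (LVar n) \<and> (\<forall>x\<in>#ts. approx x N) \<and> lsub k ts s t"
proof (cases "n = k")
  case True
  then obtain t0 where "t = rlift 0 k t0" "approx t0 N"
    using assms approx_lift_invert by fastforce
  then show ?thesis
    using True by (intro exI[of _ "RVar k"] exI[of _ "{#t0#}"]) (auto intro: lsub.ls_hit)
next
  case False
  then have "t = RVar (if k < n then n - 1 else n)" using assms by (auto elim: approx.cases)
  then show ?thesis
    using False lsub.ls_miss by (intro exI[of _ "RVar n"] exI[of _ "{#}"]) auto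
qed

lemma approx_subst_invert:
  "approx t (subst k N M) \<Longrightarrow> \<exists>s ts. approx s M \<and> (\<forall>x\<in>#ts. approx x N) \<and> lsub k ts s t"
proof (induction t arbitrary: k M)
  case (RVar x)
  then show ?case by (cases M) (use approx_subst_LVar_invert in auto)
next
  case (RLam t)
  show ?case
  proof (cases M)
    case (LLam M')
    then obtain s ts where "approx s M'" "\<forall>x\<in>#ts. approx x N" "lsub (Suc k) ts s t"
      using RLam by fastforce
    then show ?thesis using LLam by (intro exI[of _ "RLam s"] exI[of _ ts]) (auto intro: lsub.ls_lam)
  qed (use RLam.prems approx_subst_LVar_invert in auto)
next
  case (RApp t bag)
  show ?case
  proof (cases M)
    case (LApp M1 M2)
    then have h: "approx t (subst k N M1)" "\<forall>x\<in>#bag. approx x (subst k N M2)"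
      using RApp.prems by auto
    obtain s1 T0 where s1: "approx s1 M1" "\<forall>x\<in>#T0. approx x N" "lsub k T0 s1 t"
      using RApp.IH(1) h(1) by blast
    obtain xs where xs: "mset xs = bag" using ex_mset by blast
    have "\<forall>i<length xs. \<exists>s ts. approx s M2 \<and> (\<forall>x\<in>#ts. approx x N) \<and> lsub k ts s (xs ! i)"
      using RApp.IH(2) h(2) xs by (metis nth_mem_mset)
    then obtain f g where fg: "\<forall>i<length xs. approx (f i) M2 \<and> (\<forall>x\<in>#g i. approx x N) \<and>
        lsub k (g i) (f i) (xs ! i)"
      by metis
    define us where "us = map f [0..<length xs]"
    define Ts where "Ts = map g [0..<length xs]"
    have "lsub k (T0 + sum_list Ts) (RApp s1 (mset us)) (RApp t (mset xs))"
      by (rule lsub.ls_app) (use s1 fg in \<open>auto simp: us_def Ts_def\<close>)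
    moreover have "approx (RApp s1 (mset us)) M" using LApp s1 fg by (auto simp: us_def)
    moreover have "\<forall>x\<in>#T0 + sum_list Ts. approx x N" using s1 fg by (auto simp: Ts_def)
    ultimately show ?thesis using xs by blast
  qed (use RApp.prems approx_subst_LVar_invert in auto)
qed

section \<open>Taylor expansions of unsolvable terms vanish\<close>

lemma apps_Nil [simp]: "apps X [] = X"
  by (simp add: apps_def)

lemma apps_Cons [simp]: "apps X (N # Ns) = apps (LApp X N) Ns"
  by (simp add: apps_def)

lemma apps_snoc [simp]: "apps X (Ns @ [N]) = LApp (apps X Ns) N"
  by (simp add: apps_def)

lemma lams_add: "lams m (lams a X) = lams (m + a) X"
  by (induction m) auto

lemma subst_lams: "subst j N (lams c B) = lams c (subst (j + c) N B)"
  by (induction c arbitrary: j) auto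

lemma subst_apps: "subst j N (apps H Ps) = apps (subst j N H) (map (subst j N) Ps)"
  by (induction Ps rule: rev_induct) auto

lemma lift_lams_LVar: "i < c' + c \<Longrightarrow> lift c' d (lams c (LVar i)) = lams c (LVar i)"
  by (induction c arbitrary: c') auto

lemma subst_lams_LVar: "i < j + c \<Longrightarrow> subst j N (lams c (LVar i)) = lams c (LVar i)"
  by (simp add: subst_lams)

lemma beta_apps: "beta X Y \<Longrightarrow> beta (apps X Ps) (apps Y Ps)"
  by (induction Ps rule: rev_induct) (auto intro: beta.b_appl)

lemma beta_lams: "beta X Y \<Longrightarrow> beta (lams m X) (lams m Y)"
  by (induction m) (auto intro: beta.b_lam)

definition eraser :: "nat \<Rightarrow> lterm" where
  "eraser k = lams (Suc k) (LVar 0)"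

lemma subst_eraser [simp]: "subst j N (eraser k) = eraser k"
  unfolding eraser_def by (rule subst_lams_LVar) simp

lemma lift_eraser [simp]: "lift c d (eraser k) = eraser k"
  unfolding eraser_def by (rule lift_lams_LVar) simp

lemma eraser_apps: "length Ps = k \<Longrightarrow> beta\<^sup>*\<^sup>* (apps (eraser k) Ps) (LLam (LVar 0))"
proof (induction Ps arbitrary: k)
  case (Cons P Ps)
  then obtain k' where k: "k = Suc k'" "length Ps = k'" by auto
  have "subst 0 P (lams k (LVar 0)) = eraser k'"
    using k(1) by (simp add: subst_lams_LVar eraser_def)
  then have "beta (LApp (eraser k) P) (eraser k')"
    using beta.b_redex[of "lams k (LVar 0)" P] by (simp add: eraser_def)
  then have "beta (apps (eraser k) (P # Ps)) (apps (eraser k') Ps)"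
    by (simp add: beta_apps)
  then show ?case using Cons.IH[OF k(2)] by (meson converse_rtranclp_into_rtranclp)
qed (simp add: eraser_def)

lemma apps_lams_replicate_eraser:
  "length Ps = k \<Longrightarrow> H = eraser k \<or> (\<exists>z<n. H = LVar z) \<Longrightarrow>
    \<exists>Ps'. length Ps' = k \<and> beta\<^sup>*\<^sup>* (apps (lams n (apps H Ps)) (replicate n (eraser k))) (apps (eraser k) Ps')"
proof (induction n arbitrary: H Ps)
  case (Suc n)
  define H' where "H' = subst n (eraser k) H"
  have H': "H' = eraser k \<or> (\<exists>z<n. H' = LVar z)"
    using Suc.prems(2) unfolding H'_def by (auto simp: less_Suc_eq)
  have "beta (apps (lams (Suc n) (apps H Ps)) (replicate (Suc n) (eraser k)))
     (apps (lams n (apps H' (map (subst n (eraser k)) Ps))) (replicate n (eraser k)))"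
    using beta.b_redex[of "lams n (apps H Ps)" "eraser k"]
    by (simp add: beta_apps subst_lams subst_apps H'_def)
  moreover obtain Ps' where "length Ps' = k" and
    "beta\<^sup>*\<^sup>* (apps (lams n (apps H' (map (subst n (eraser k)) Ps))) (replicate n (eraser k)))
      (apps (eraser k) Ps')"
    using Suc.IH[of "map (subst n (eraser k)) Ps" H'] Suc.prems H' by auto
  ultimately show ?case by (blast intro: converse_rtranclp_into_rtranclp)
qed auto

lemma T001_LVar: "T001 (LVar n)"
  by (rule T001.intros) (rule ind001.i_var)

lemma T001_lams: "T001 X \<Longrightarrow> T001 (lams c X)"
proof (induction c)
  case (Suc c)
  then have "ind001 T001 (lams c X)" by (auto elim: T001.cases)
  then show ?case by (auto intro: T001.intros ind001.i_lam)
qed simp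

lemma rtranclp_imp_infred_identity: "R\<^sup>*\<^sup>* X (LLam (LVar 0)) \<Longrightarrow> infred R X (LLam (LVar 0))"
  by (intro infred.intros infind.inf_lam[OF _ infind.inf_var]) auto

text \<open>Abstracting the head variable and feeding erasers to all abstractions turns the head into
  \<open>eraser (length Ps)\<close>, which then consumes the arguments.\<close>

lemma solvable_hnf: "solvable (lams a (apps (LVar z) Ps))"
proof -
  define k where "k = length Ps"
  define m where "m = Suc z"
  obtain Ps' where "length Ps' = k"
    "beta\<^sup>*\<^sup>* (apps (lams (m + a) (apps (LVar z) Ps)) (replicate (m + a) (eraser k))) (apps (eraser k) Ps')"
    using apps_lams_replicate_eraser[of Ps k "LVar z" "m + a"] unfolding k_def m_def by auto
  then have "beta_inf (apps (lams m (lams a (apps (LVar z) Ps))) (replicate (m + a) (eraser k)))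
      (LLam (LVar 0))"
    using eraser_apps by (intro rtranclp_imp_infred_identity) (metis lams_add rtranclp_trans)
  moreover have "T001 (eraser k)"
    unfolding eraser_def by (rule T001_lams[OF T001_LVar])
  ultimately show ?thesis unfolding solvable_def by (metis in_set_replicate)
qed

lemma infred_converse_step:
  assumes "R X Y" and "infred R Y Z"
  shows "infred R X Z"
proof -
  from assms(2) have "infind R (infred R) Y Z" by (cases rule: infred.cases)
  then have "infind R (infred R) X Z"
    by (cases rule: infind.cases)
      (auto intro: infind.intros converse_rtranclp_into_rtranclp[of R X Y, OF assms(1)])
  then show ?thesis by (rule infred.intros)
qed

lemma solvable_beta_converse: "beta M M' \<Longrightarrow> solvable M' \<Longrightarrow> solvable M"
  unfolding solvable_def by (meson beta_apps beta_lams infred_converse_step)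

primrec rhead_var :: "rterm \<Rightarrow> bool" where
  "rhead_var (RVar n) = True"
| "rhead_var (RLam s) = False"
| "rhead_var (RApp s ts) = rhead_var s"

primrec rhnf :: "rterm \<Rightarrow> bool" where
  "rhnf (RVar n) = True"
| "rhnf (RLam s) = rhnf s"
| "rhnf (RApp s ts) = rhead_var s"

lemma approx_rhead_var: "approx s M \<Longrightarrow> rhead_var s \<Longrightarrow> \<exists>z Ps. M = apps (LVar z) Ps"
proof (induction s arbitrary: M)
  case (RVar n)
  then show ?case by (intro exI[of _ n] exI[of _ "[]"]) simp
next
  case (RApp s ts)
  then obtain M1 M2 where M: "M = LApp M1 M2" "approx s M1" by auto
  then obtain z Ps where "M1 = apps (LVar z) Ps" using RApp.IH(1) RApp.prems(2) by (metis rhead_var.simps(3))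
  then show ?case using M by (intro exI[of _ z] exI[of _ "Ps @ [M2]"]) simp
qed auto

lemma approx_rhnf: "approx s M \<Longrightarrow> rhnf s \<Longrightarrow> \<exists>a z Ps. M = lams a (apps (LVar z) Ps)"
proof (induction s arbitrary: M)
  case (RVar n)
  then show ?case using approx_rhead_var[of "RVar n" M] by (metis lams.simps(1) rhead_var.simps(1))
next
  case (RLam s)
  then obtain M' where M: "M = LLam M'" "approx s M'" by auto
  then obtain a z Ps where "M' = lams a (apps (LVar z) Ps)" using RLam.IH RLam.prems(2) by (metis rhnf.simps(2))
  then show ?case using M by (intro exI[of _ "Suc a"] exI[of _ z] exI[of _ Ps]) simp
next
  case (RApp s ts)
  then show ?case using approx_rhead_var[of "RApp s ts" M] by (metis lams.simps(1) rhnf.simps(3) rhead_var.simps(3))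
qed

lemma approx_head_step:
  "approx s M \<Longrightarrow> \<not> rhnf s \<Longrightarrow> \<exists>T M'. rred s T \<and> beta M M' \<and> (\<forall>u\<in>T. approx u M')"
proof (induction s arbitrary: M)
  case (RLam s)
  then obtain M0 T M' where "M = LLam M0" "rred s T" "beta M0 M'" "\<forall>u\<in>T. approx u M'"
    by fastforce
  then show ?case by (intro exI[of _ "RLam ` T"] exI[of _ "LLam M'"]) (auto intro: rred.r_lam beta.b_lam)
next
  case (RApp s ts)
  then obtain M1 M2 where M: "M = LApp M1 M2" "approx s M1" "\<forall>t\<in>#ts. approx t M2" by auto
  show ?case
  proof (cases s)
    case (RLam s1)
    then obtain M0 where M0: "M1 = LLam M0" "approx s1 M0" using M by auto
    have "\<forall>u\<in>linsubst s1 ts. approx u (subst 0 M2 M0)"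
      using M M0 lsub_approx_subst unfolding linsubst_def by blast
    then show ?thesis using M M0 RLam
      by (intro exI[of _ "linsubst s1 ts"] exI[of _ "subst 0 M2 M0"]) (auto intro: rred.r_redex beta.b_redex)
  next
    case (RApp s2 ts2)
    then have "\<not> rhnf s" using RApp.prems(2) by simp
    then obtain T M' where "rred s T" "beta M1 M'" "\<forall>u\<in>T. approx u M'"
      using RApp.IH(1) M(2) by blast
    then show ?thesis using M
      by (intro exI[of _ "(\<lambda>x. RApp x ts) ` T"] exI[of _ "LApp M' M2"]) (auto intro: rred.r_head beta.b_appl)
  qed (use RApp.prems in simp)
qed simp

lemma unsolvable_taylor_reduces_to_zero: "approx s M \<Longrightarrow> \<not> solvable M \<Longrightarrow> rsum_star {s} {}"
proof (induction "rsize s" arbitrary: s M rule: less_induct)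
  case less
  show ?case
  proof (cases "rhnf s")
    case True
    then show ?thesis using approx_rhnf[OF less.prems(1)] solvable_hnf less.prems(2) by auto
  next
    case False
    then obtain T M' where h: "rred s T" "beta M M'" "\<forall>u\<in>T. approx u M'"
      using approx_head_step less.prems(1) by blast
    have "\<not> solvable M'" using solvable_beta_converse h(2) less.prems(2) by blast
    then have "\<forall>u\<in>T. rsum_star {u} {}" using less.hyps rred_rsize_less[OF h(1)] h(3) by blast
    then have "rsum_star T {}" using rsum_star_UN[OF finite_rred[OF h(1)], of "\<lambda>_. {}"] by auto
    then show ?thesis using rsum_step_of_rred[OF h(1)] by (simp add: converse_rtranclp_into_rtranclp)
  qed
qed

definition reduces_into :: "rterm \<Rightarrow> rterm set \<Rightarrow> bool" where
  "reduces_into s Y \<longleftrightarrow> (\<exists>T. finite T \<and> rsum_star {s} T \<and> T \<subseteq> Y)"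

definition reaches_within :: "rterm \<Rightarrow> rterm set \<Rightarrow> rterm \<Rightarrow> bool" where
  "reaches_within s Y t \<longleftrightarrow> (\<exists>T. finite T \<and> rsum_star {s} T \<and> T \<subseteq> Y \<and> t \<in> T)"

lemma reduces_into_refl: "s \<in> Y \<Longrightarrow> reduces_into s Y"
  unfolding reduces_into_def by (intro exI[of _ "{s}"]) auto

lemma reaches_within_refl: "s \<in> Y \<Longrightarrow> reaches_within s Y s"
  unfolding reaches_within_def by (intro exI[of _ "{s}"]) auto

lemma reaches_within_imp_reduces_into: "reaches_within s Y t \<Longrightarrow> reduces_into s Y"
  unfolding reaches_within_def reduces_into_def by blast

lemma reaches_within_mem: "reaches_within s Y t \<Longrightarrow> t \<in> Y"
  unfolding reaches_within_def by blast

lemma reduces_into_mono: "reduces_into s Y \<Longrightarrow> Y \<subseteq> Y' \<Longrightarrow> reduces_into s Y'"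
  unfolding reduces_into_def by blast

lemma reaches_within_mono: "reaches_within s Y t \<Longrightarrow> Y \<subseteq> Y' \<Longrightarrow> reaches_within s Y' t"
  unfolding reaches_within_def by blast

lemma reduces_into_zero: "rsum_star {s} {} \<Longrightarrow> reduces_into s Y"
  unfolding reduces_into_def by blast

lemma reduces_into_rred: "rred s T \<Longrightarrow> T \<subseteq> Y \<Longrightarrow> reduces_into s Y"
  unfolding reduces_into_def by (blast intro: finite_rred rsum_step_of_rred)

lemma reaches_within_rred: "rred s T \<Longrightarrow> T \<subseteq> Y \<Longrightarrow> t \<in> T \<Longrightarrow> reaches_within s Y t"
  unfolding reaches_within_def by (blast intro: finite_rred rsum_step_of_rred)

lemma reduces_into_image:
  assumes "\<And>s T. rred s T \<Longrightarrow> rred (f s) (f ` T)" and "reduces_into s Y"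
  shows "reduces_into (f s) (f ` Y)"
  using assms rsum_star_image[of f "{s}"] unfolding reduces_into_def
  by (metis finite_imageI image_empty image_insert image_mono)

lemma reaches_within_image:
  assumes "\<And>s T. rred s T \<Longrightarrow> rred (f s) (f ` T)" and "reaches_within s Y t"
  shows "reaches_within (f s) (f ` Y) (f t)"
  using assms rsum_star_image[of f "{s}"] unfolding reaches_within_def
  by (metis finite_imageI image_empty image_eqI image_insert image_mono)

text \<open>Only reducts that are no larger than \<open>s\<close> need to be continued; this is what makes
  induction on the size of approximants possible.\<close>

lemma reduces_into_trans:
  assumes "reduces_into s A" and "\<And>x. x \<in> A \<Longrightarrow> rsize x \<le> rsize s \<Longrightarrow> reduces_into x Y"
  shows "reduces_into s Y"
proof -
  obtain T where T: "finite T" "rsum_star {s} T" "T \<subseteq> A"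
    using assms(1) unfolding reduces_into_def by blast
  have "\<forall>x\<in>T. \<exists>B. finite B \<and> rsum_star {x} B \<and> B \<subseteq> Y"
    using assms(2) T(3) rsum_star_rsize_le[OF T(2)] unfolding reduces_into_def by blast
  then obtain B where B: "\<And>x. x \<in> T \<Longrightarrow> finite (B x) \<and> rsum_star {x} (B x) \<and> B x \<subseteq> Y"
    by metis
  then have "rsum_star T (\<Union>x\<in>T. B x)" using rsum_star_UN[OF T(1)] by blast
  then show ?thesis
    unfolding reduces_into_def using T B by (intro exI[of _ "\<Union>x\<in>T. B x"]) (auto intro: rtranclp_trans)
qed

lemma reaches_within_trans:
  assumes "reaches_within s A a" and "reaches_within a Y t" and "\<And>x. x \<in> A \<Longrightarrow> reduces_into x Y"
  shows "reaches_within s Y t"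
proof -
  obtain T where T: "finite T" "rsum_star {s} T" "T \<subseteq> A" "a \<in> T"
    using assms(1) unfolding reaches_within_def by blast
  obtain Ta where Ta: "finite Ta" "rsum_star {a} Ta" "Ta \<subseteq> Y" "t \<in> Ta"
    using assms(2) unfolding reaches_within_def by blast
  obtain B where B: "\<And>x. x \<in> T \<Longrightarrow> finite (B x) \<and> rsum_star {x} (B x) \<and> B x \<subseteq> Y"
    using assms(3) T(3) unfolding reduces_into_def by (metis subsetD)
  define B' where "B' x = (if x = a then Ta else B x)" for x
  have "rsum_star T (\<Union>x\<in>T. B' x)"
    by (rule rsum_star_UN[OF T(1)]) (use B Ta in \<open>auto simp: B'_def\<close>)
  moreover have "finite (\<Union>x\<in>T. B' x)" "(\<Union>x\<in>T. B' x) \<subseteq> Y" "t \<in> (\<Union>x\<in>T. B' x)"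
    using T B Ta unfolding B'_def by auto
  ultimately show ?thesis
    unfolding reaches_within_def using T(2) by (blast intro: rtranclp_trans)
qed

lemma rtildeI:
  assumes "\<And>s. s \<in> S \<Longrightarrow> reduces_into s S'" and "\<And>t. t \<in> S' \<Longrightarrow> \<exists>s\<in>S. reaches_within s S' t"
  shows "rtilde S S'"
proof -
  define P where "P = {(s, T). s \<in> S \<and> finite T \<and> rsum_star {s} T \<and> T \<subseteq> S'}"
  have "S \<subseteq> fst ` P"
  proof
    fix s assume "s \<in> S"
    with assms(1) obtain T where "finite T" "rsum_star {s} T" "T \<subseteq> S'"
      unfolding reduces_into_def by blast
    with \<open>s \<in> S\<close> have "(s, T) \<in> P" by (simp add: P_def)
    then show "s \<in> fst ` P" by (metis fst_conv image_eqI)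
  qed
  moreover have "S' \<subseteq> \<Union>(snd ` P)"
  proof
    fix t assume "t \<in> S'"
    with assms(2) obtain s T where "s \<in> S" "finite T" "rsum_star {s} T" "T \<subseteq> S'" "t \<in> T"
      unfolding reaches_within_def by blast
    then have "(s, T) \<in> P" by (simp add: P_def)
    then show "t \<in> \<Union>(snd ` P)" using \<open>t \<in> T\<close> by force
  qed
  ultimately show ?thesis
    unfolding rtilde_def by (intro exI[of _ P]) (auto simp: P_def)
qed

lemma reduces_into_RApp_arg:
  assumes "\<forall>y\<in>#b. reduces_into y Y"
  shows "reduces_into (RApp s b) {RApp s b' | b'. set_mset b' \<subseteq> Y}"
proof -
  obtain ys where ys: "mset ys = b" using ex_mset by blast
  obtain f where f: "\<And>y. y \<in> set ys \<Longrightarrow> finite (f y) \<and> rsum_star {y} (f y) \<and> f y \<subseteq> Y"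
    using assms ys unfolding reduces_into_def by (metis set_mset_mset)
  have "rsum_star {RApp s ({#} + mset ys)} (bag_choices s {#} (map f ys))"
    using f by (intro rsum_star_bag_choices) (simp add: list.rel_map list_all2_same)
  moreover have "finite (bag_choices s {#} (map f ys))"
    using f by (intro finite_bag_choices) auto
  moreover have "bag_choices s {#} (map f ys) \<subseteq> {RApp s b' | b'. set_mset b' \<subseteq> Y}"
    using bag_choices_subset[of "map f ys" Y s "{#}"] f by auto
  ultimately show ?thesis unfolding reduces_into_def using ys by auto
qed

lemma reaches_within_RApp_arg:
  assumes "\<forall>y\<in>#b. \<exists>x\<in>X. reaches_within x Y y"
  shows "\<exists>b0. set_mset b0 \<subseteq> X \<and> reaches_within (RApp s b0) {RApp s b' | b'. set_mset b' \<subseteq> Y} (RApp s b)"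
proof -
  obtain ys where ys: "mset ys = b" using ex_mset by blast
  obtain g f where gf: "\<And>y. y \<in> set ys \<Longrightarrow>
      g y \<in> X \<and> finite (f y) \<and> rsum_star {g y} (f y) \<and> f y \<subseteq> Y \<and> y \<in> f y"
    using assms ys unfolding reaches_within_def by (metis set_mset_mset)
  have "rsum_star {RApp s ({#} + mset (map g ys))} (bag_choices s {#} (map f ys))"
    using gf by (intro rsum_star_bag_choices) (simp add: list.rel_map list_all2_same)
  moreover have "finite (bag_choices s {#} (map f ys))"
    using gf by (intro finite_bag_choices) auto
  moreover have "bag_choices s {#} (map f ys) \<subseteq> {RApp s b' | b'. set_mset b' \<subseteq> Y}"
    using bag_choices_subset[of "map f ys" Y s "{#}"] gf by auto
  moreover have "RApp s b \<in> bag_choices s {#} (map f ys)"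
    unfolding bag_choices_def using gf ys by (auto simp: list.rel_map list_all2_same)
  ultimately show ?thesis
    unfolding reaches_within_def using gf by (intro exI[of _ "mset (map g ys)"]) auto
qed

lemma reduces_into_taylor_LLam: "reduces_into s (taylor M) \<Longrightarrow> reduces_into (RLam s) (taylor (LLam M))"
  unfolding taylor_LLam by (rule reduces_into_image) (rule rred.r_lam)

lemma reaches_within_taylor_LLam:
  "reaches_within s (taylor M) t \<Longrightarrow> reaches_within (RLam s) (taylor (LLam M)) (RLam t)"
  unfolding taylor_LLam by (rule reaches_within_image) (rule rred.r_lam)

lemma reduces_into_taylor_LApp:
  assumes "reduces_into s (taylor M)" and "\<forall>y\<in>#b. reduces_into y (taylor N)"
  shows "reduces_into (RApp s b) (taylor (LApp M N))"
proof -
  have "reduces_into (RApp s b) ((\<lambda>x. RApp x b) ` taylor M)"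
    by (rule reduces_into_image[where f = "\<lambda>x. RApp x b", OF _ assms(1)]) (rule rred.r_head)
  then show ?thesis
  proof (rule reduces_into_trans)
    fix x assume "x \<in> (\<lambda>x. RApp x b) ` taylor M"
    then obtain v where v: "x = RApp v b" "v \<in> taylor M" by blast
    then have "{RApp v b' | b'. set_mset b' \<subseteq> taylor N} \<subseteq> taylor (LApp M N)"
      by (auto simp: taylor_LApp simp del: mem_taylor)
    then show "reduces_into x (taylor (LApp M N))"
      using reduces_into_RApp_arg[OF assms(2)] v(1) reduces_into_mono by blast
  qed
qed

lemma reaches_within_taylor_LApp:
  assumes "reaches_within s (taylor M) t" and "\<forall>y\<in>#b. \<exists>x\<in>taylor N. reaches_within x (taylor N') y"
  shows "\<exists>b0. set_mset b0 \<subseteq> taylor N \<and> reaches_within (RApp s b0) (taylor (LApp M N')) (RApp t b)"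
proof -
  let ?X = "{x \<in> taylor N. reduces_into x (taylor N')}"
  have "\<forall>y\<in>#b. \<exists>x\<in>?X. reaches_within x (taylor N') y"
    using assms(2) reaches_within_imp_reduces_into by blast
  then obtain b0 where b0: "set_mset b0 \<subseteq> ?X"
    "reaches_within (RApp t b0) {RApp t b' | b'. set_mset b' \<subseteq> taylor N'} (RApp t b)"
    using reaches_within_RApp_arg by blast
  have "{RApp t b' | b'. set_mset b' \<subseteq> taylor N'} \<subseteq> taylor (LApp M N')"
    using reaches_within_mem[OF assms(1)] by (auto simp: taylor_LApp simp del: mem_taylor)
  then have "reaches_within (RApp t b0) (taylor (LApp M N')) (RApp t b)"
    using b0(2) reaches_within_mono by blast
  moreover have "reaches_within (RApp s b0) ((\<lambda>x. RApp x b0) ` taylor M) (RApp t b0)"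
    by (rule reaches_within_image[where f = "\<lambda>x. RApp x b0", OF _ assms(1)]) (rule rred.r_head)
  moreover have "reduces_into x (taylor (LApp M N'))" if "x \<in> (\<lambda>x. RApp x b0) ` taylor M" for x
  proof -
    from that obtain v where "x = RApp v b0" "v \<in> taylor M" by blast
    moreover have "\<forall>y\<in>#b0. reduces_into y (taylor N')" using b0(1) by blast
    ultimately show ?thesis by (metis reduces_into_taylor_LApp reduces_into_refl)
  qed
  ultimately have "reaches_within (RApp s b0) (taylor (LApp M N')) (RApp t b)"
    using reaches_within_trans by blast
  then show ?thesis using b0(1) by blast
qed

section \<open>Simulation of beta-bottom reduction by resource reduction\<close>

lemma betabot_reduces_taylor: "betabot M M' \<Longrightarrow> s \<in> taylor M \<Longrightarrow> reduces_into s (taylor M')"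
proof (induction arbitrary: s rule: betabot.induct)
  case (bb_redex M N)
  then obtain s1 ts where "s = RApp (RLam s1) ts" "approx s1 M" "\<forall>t\<in>#ts. approx t N"
    by (auto simp: approx_LApp approx_LLam)
  then show ?case
    by (auto intro!: reduces_into_rred[OF rred.r_redex] simp: linsubst_def lsub_approx_subst)
next
  case (bb_bot M M')
  then show ?case
    by (cases rule: bot0.cases)
      (auto intro: reduces_into_zero unsolvable_taylor_reduces_to_zero simp: approx_LLam approx_LApp)
next
  case (bb_lam M M')
  then obtain s' where "s = RLam s'" "approx s' M"
    by (auto simp: approx_LLam)
  then show ?case using bb_lam.IH reduces_into_taylor_LLam by simp
next
  case (bb_appl M M' N)
  then obtain s' ts where "s = RApp s' ts" "approx s' M" "\<forall>t\<in>#ts. approx t N"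
    by (auto simp: approx_LApp)
  then show ?case using bb_appl.IH reduces_into_taylor_LApp reduces_into_refl by simp
next
  case (bb_appr N N' M)
  then obtain s' ts where "s = RApp s' ts" "approx s' M" "\<forall>t\<in>#ts. approx t N"
    by (auto simp: approx_LApp)
  then show ?case using bb_appr.IH reduces_into_taylor_LApp reduces_into_refl by simp
qed

lemma betabot_reaches_taylor: "betabot M M' \<Longrightarrow> t \<in> taylor M' \<Longrightarrow> \<exists>s\<in>taylor M. reaches_within s (taylor M') t"
proof (induction arbitrary: t rule: betabot.induct)
  case (bb_redex M N)
  then obtain s1 ts where h: "approx s1 M" "\<forall>x\<in>#ts. approx x N" "lsub 0 ts s1 t"
    using approx_subst_invert[of t 0 N M] by auto
  have "linsubst s1 ts \<subseteq> taylor (subst 0 N M)"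
    using h(1,2) lsub_approx_subst by (auto simp: linsubst_def)
  then have "reaches_within (RApp (RLam s1) ts) (taylor (subst 0 N M)) t"
    using h(3) by (intro reaches_within_rred[OF rred.r_redex]) (auto simp: linsubst_def)
  moreover have "RApp (RLam s1) ts \<in> taylor (LApp (LLam M) N)"
    using h(1,2) by simp
  ultimately show ?case by blast
next
  case (bb_bot M M')
  then have "M' = LBot" by (cases rule: bot0.cases) auto
  then show ?case using bb_bot.prems by simp
next
  case (bb_lam M M')
  then obtain t' where t: "t = RLam t'" "approx t' M'"
    by (auto simp: approx_LLam)
  then obtain s where "s \<in> taylor M" "reaches_within s (taylor M') t'"
    using bb_lam.IH[of t'] by auto
  then have "RLam s \<in> taylor (LLam M)" "reaches_within (RLam s) (taylor (LLam M')) t"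
    using t reaches_within_taylor_LLam by auto
  then show ?case by blast
next
  case (bb_appl M M' N)
  then obtain t' ts where t: "t = RApp t' ts" "approx t' M'" "\<forall>x\<in>#ts. approx x N"
    by (auto simp: approx_LApp)
  then obtain s where s: "s \<in> taylor M" "reaches_within s (taylor M') t'"
    using bb_appl.IH[of t'] by auto
  have "\<forall>y\<in>#ts. \<exists>x\<in>taylor N. reaches_within x (taylor N) y"
    using t(3) by (metis mem_taylor reaches_within_refl)
  then obtain b0 where "set_mset b0 \<subseteq> taylor N" "reaches_within (RApp s b0) (taylor (LApp M' N)) t"
    using reaches_within_taylor_LApp[OF s(2)] t(1) by blast
  moreover from this(1) have "RApp s b0 \<in> taylor (LApp M N)"
    using s(1) by (auto simp: approx_LApp)
  ultimately show ?case by blast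
next
  case (bb_appr N N' M)
  then obtain t1 ts where t: "t = RApp t1 ts" "approx t1 M" "\<forall>x\<in>#ts. approx x N'"
    by (auto simp: approx_LApp)
  then have "\<forall>y\<in>#ts. \<exists>x\<in>taylor N. reaches_within x (taylor N') y"
    using bb_appr.IH by auto
  moreover have "reaches_within t1 (taylor M) t1"
    using t(2) by (simp add: reaches_within_refl)
  ultimately obtain b0 where "set_mset b0 \<subseteq> taylor N" "reaches_within (RApp t1 b0) (taylor (LApp M N')) t"
    using reaches_within_taylor_LApp t(1) by blast
  moreover from this(1) have "RApp t1 b0 \<in> taylor (LApp M N)"
    using t(2) by (auto simp: approx_LApp)
  ultimately show ?case by blast
qed

lemma betabot_rtranclp_reduces_taylor:
  "betabot\<^sup>*\<^sup>* M M' \<Longrightarrow> s \<in> taylor M \<Longrightarrow> reduces_into s (taylor M')"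
proof (induction rule: rtranclp_induct)
  case base
  then show ?case by (rule reduces_into_refl)
next
  case (step M1 M2)
  show ?case
    using step.IH[OF step.prems] by (rule reduces_into_trans) (use betabot_reduces_taylor step.hyps(2) in blast)
qed

lemma betabot_rtranclp_reaches_taylor:
  "betabot\<^sup>*\<^sup>* M M' \<Longrightarrow> t \<in> taylor M' \<Longrightarrow> \<exists>s\<in>taylor M. reaches_within s (taylor M') t"
proof (induction arbitrary: t rule: rtranclp_induct)
  case base
  then show ?case using reaches_within_refl by blast
next
  case (step M1 M2)
  obtain s1 where "s1 \<in> taylor M1" "reaches_within s1 (taylor M2) t"
    using betabot_reaches_taylor step.hyps(2) step.prems by blast
  moreover obtain s where "s \<in> taylor M" "reaches_within s (taylor M1) s1"
    using step.IH calculation(1) by blast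
  ultimately show ?case
    using reaches_within_trans betabot_reduces_taylor[OF step.hyps(2)] by blast
qed

lemma betabot_inf_reduces_taylor: "betabot_inf M N \<Longrightarrow> s \<in> taylor M \<Longrightarrow> reduces_into s (taylor N)"
proof (induction "rsize s" arbitrary: s M N rule: less_induct)
  case less
  from less.prems(1) have "infind betabot betabot_inf M N"
    by (cases rule: infred.cases)
  then show ?case
  proof (cases rule: infind.cases)
    case (inf_var x)
    then show ?thesis using betabot_rtranclp_reduces_taylor[OF inf_var(2) less.prems(2)] by simp
  next
    case inf_bot
    then show ?thesis using betabot_rtranclp_reduces_taylor[OF inf_bot(2) less.prems(2)] by simp
  next
    case (inf_lam P P')
    have "reduces_into s (taylor (LLam P))"
      using betabot_rtranclp_reduces_taylor[OF inf_lam(2) less.prems(2)] .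
    then show ?thesis
    proof (rule reduces_into_trans)
      fix x assume "x \<in> taylor (LLam P)" "rsize x \<le> rsize s"
      then obtain x' where x': "x = RLam x'" "approx x' P" "rsize x' < rsize s"
        by (auto simp: approx_LLam)
      then have "reduces_into x' (taylor P')"
        using less.hyps[OF x'(3) infred.intros[OF inf_lam(3)]] x'(2) by simp
      then show "reduces_into x (taylor N)"
        using x'(1) inf_lam(1) reduces_into_taylor_LLam by simp
    qed
  next
    case (inf_app P Q P' Q')
    have "reduces_into s (taylor (LApp P Q))"
      using betabot_rtranclp_reduces_taylor[OF inf_app(2) less.prems(2)] .
    then show ?thesis
    proof (rule reduces_into_trans)
      fix x assume x: "x \<in> taylor (LApp P Q)" "rsize x \<le> rsize s"
      then obtain x1 b where xb: "x = RApp x1 b" "approx x1 P" "\<forall>y\<in>#b. approx y Q"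
        by (auto simp: approx_LApp)
      have "rsize x1 < rsize s" "\<forall>y\<in>#b. rsize y < rsize s"
        using x(2) xb(1) rsize_less_RApp[of _ b x1] by (auto intro: less_le_trans)
      then have "reduces_into x1 (taylor P')" "\<forall>y\<in>#b. reduces_into y (taylor Q')"
        using less.hyps[OF _ infred.intros[OF inf_app(3)]] less.hyps[OF _ inf_app(4)] xb(2,3)
        by simp_all
      then show "reduces_into x (taylor N)"
        using xb(1) inf_app(1) reduces_into_taylor_LApp by simp
    qed
  qed
qed

lemma reaches_through_prefix:
  assumes "betabot\<^sup>*\<^sup>* M H" and "betabot_inf H N" and "a \<in> taylor H" and "reaches_within a (taylor N) t"
  shows "\<exists>s\<in>taylor M. reaches_within s (taylor N) t"
proof -
  obtain s where "s \<in> taylor M" "reaches_within s (taylor H) a"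
    using betabot_rtranclp_reaches_taylor assms(1,3) by blast
  then show ?thesis
    using reaches_within_trans assms(4) betabot_inf_reduces_taylor[OF assms(2)] by blast
qed

lemma betabot_inf_reaches_taylor:
  "betabot_inf M N \<Longrightarrow> t \<in> taylor N \<Longrightarrow> \<exists>s\<in>taylor M. reaches_within s (taylor N) t"
proof (induction "rsize t" arbitrary: t M N rule: less_induct)
  case less
  from less.prems(1) have "infind betabot betabot_inf M N"
    by (cases rule: infred.cases)
  then show ?case
  proof (cases rule: infind.cases)
    case (inf_var x)
    then show ?thesis using betabot_rtranclp_reaches_taylor[OF inf_var(2)] less.prems(2) by simp
  next
    case inf_bot
    then show ?thesis using less.prems(2) by simp
  next
    case (inf_lam P P')
    obtain t' where t: "t = RLam t'" "approx t' P'"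
      using less.prems(2) inf_lam(1) by (auto simp: approx_LLam)
    then obtain s' where "s' \<in> taylor P" "reaches_within s' (taylor P') t'"
      using less.hyps[OF _ infred.intros[OF inf_lam(3)], of t'] by auto
    then have "RLam s' \<in> taylor (LLam P)" "reaches_within (RLam s') (taylor N) t"
      using t(1) inf_lam(1) reaches_within_taylor_LLam by auto
    moreover have "betabot_inf (LLam P) N"
      unfolding inf_lam(1) by (rule infred.intros, rule infind.inf_lam[OF rtranclp.rtrancl_refl inf_lam(3)])
    ultimately show ?thesis using reaches_through_prefix inf_lam(2) by blast
  next
    case (inf_app P Q P' Q')
    obtain t1 b where t: "t = RApp t1 b" "approx t1 P'" "\<forall>y\<in>#b. approx y Q'"
      using less.prems(2) inf_app(1) by (auto simp: approx_LApp)
    then obtain s1 where s1: "s1 \<in> taylor P" "reaches_within s1 (taylor P') t1"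
      using less.hyps[OF _ infred.intros[OF inf_app(3)], of t1] by auto
    have "\<forall>y\<in>#b. \<exists>x\<in>taylor Q. reaches_within x (taylor Q') y"
      using less.hyps[OF _ inf_app(4)] t rsize_less_RApp by simp
    then obtain b0 where b0: "set_mset b0 \<subseteq> taylor Q" "reaches_within (RApp s1 b0) (taylor N) t"
      using reaches_within_taylor_LApp[OF s1(2)] t(1) inf_app(1) by blast
    have "RApp s1 b0 \<in> taylor (LApp P Q)"
      using s1(1) b0(1) by (auto simp: approx_LApp)
    moreover have "betabot_inf (LApp P Q) N"
      unfolding inf_app(1)
      by (rule infred.intros, rule infind.inf_app[OF rtranclp.rtrancl_refl inf_app(3,4)])
    ultimately show ?thesis using reaches_through_prefix inf_app(2) b0(2) by blast
  qed
qed

theorem mainTheorem12: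
  assumes "T001 M" and "T001 N" and "betabot_inf M N"
  shows "rtilde (taylor M) (taylor N)"
  using betabot_inf_reduces_taylor[OF assms(3)] betabot_inf_reaches_taylor[OF assms(3)]
  by (rule rtildeI)

end
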